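(* Let $\mathcal{N}=\{1,\dots,N\}$, $G$ a positive integer, $D>0$, and for each $n\in\mathcal{N}$ let $\rho_n>0$, $E_n>0$, $C_n\in\mathbb{R}$, $p\in\mathbb{R}$. Consider the game in which each client $n$ chooses $x_n\in[0,D]$ to minimize $F_n(\boldsymbol{x})=\rho_n\left(\frac{1}{\sqrt{G\sum_{n'\in\mathcal{N}}x_{n'}}}+\frac{1}{G}\right)+E_nx_n+C_n+p$. If $\frac{\rho_1}{E_1}<\frac{\rho_2}{E_2}<\cdots<\frac{\rho_N}{E_N}$, then this game has a unique Nash equilibrium.
   Context: The cost $F_n$ is $+\infty$ when $\sum_{n'}x_{n'}=0$. A Nash equilibrium is a profile $\boldsymbol{x}^*\in[0,D]^N$ such that for every $n$, $F_n(x_n^*,\boldsymbol{x}^*_{-n})\le F_n(x_n,\boldsymbol{x}^*_{-n})$ for all $x_n\in[0,D]$. *)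

theory Defs
  imports "HOL-Analysis.Analysis" "HOL-Library.FuncSet"
begin

text \<open>Players are indexed by 0,...,N-1. A strategy profile is an extensional function
  on the player set with values in [0,D].\<close>

definition cost :: "nat \<Rightarrow> real \<Rightarrow> (nat \<Rightarrow> real) \<Rightarrow> (nat \<Rightarrow> real) \<Rightarrow> (nat \<Rightarrow> real)
    \<Rightarrow> real \<Rightarrow> (nat \<Rightarrow> real) \<Rightarrow> nat \<Rightarrow> ereal" where
  "cost N G \<rho> E C p x n =
     (if (\<Sum>m<N. x m) = 0 then \<infinity>
      else ereal (\<rho> n * (1 / sqrt (G * (\<Sum>m<N. x m)) + 1 / G) + E n * x n + C n + p))"

definition nash_eq :: "nat \<Rightarrow> real \<Rightarrow> real \<Rightarrow> (nat \<Rightarrow> real) \<Rightarrow> (nat \<Rightarrow> real) \<Rightarrow> (nat \<Rightarrow> real)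
    \<Rightarrow> real \<Rightarrow> (nat \<Rightarrow> real) \<Rightarrow> bool" where
  "nash_eq N G D \<rho> E C p x \<longleftrightarrow>
     x \<in> {..<N} \<rightarrow>\<^sub>E {0..D} \<and>
     (\<forall>n<N. \<forall>y\<in>{0..D}. cost N G \<rho> E C p x n \<le> cost N G \<rho> E C p (x(n := y)) n)"

end

theory Submission
  imports Defs
begin

text \<open>Write \<open>S\<close> for the total contribution. Up to terms that player \<open>n\<close> cannot influence,
  her cost is \<open>\<rho>\<^sub>n / sqrt (G S) + E\<^sub>n S\<close>, a function of \<open>S\<close> alone that strictly decreases
  up to \<open>T\<^sub>n = (\<rho>\<^sub>n / (2 E\<^sub>n sqrt G))\<^sup>2\<^sup>/\<^sup>3\<close> and strictly increases beyond it. Hence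
  \<open>x\<close> is an equilibrium iff \<open>S > 0\<close>, every player with \<open>x\<^sub>n > 0\<close> has \<open>S \<le> T\<^sub>n\<close> and every
  player with \<open>x\<^sub>n < D\<close> has \<open>T\<^sub>n \<le> S\<close>. The ratio ordering makes the thresholds \<open>T\<^sub>n\<close>
  strictly increasing, so such a profile exists (the players above a critical index
  contribute \<open>D\<close>, the critical one tops up, the others contribute nothing) and is unique:
  two of them have the same total, and then at most one threshold equals that total, so
  they agree on every other player and hence on all players.\<close>

lemma sum_fun_upd:
  fixes f :: "'a \<Rightarrow> 'b::ab_group_add"
  assumes "finite A" "a \<in> A"
  shows "sum (f(a := y)) A = sum f A - f a + y"
proof -
  have "sum (f(a := y)) A = y + sum (f(a := y)) (A - {a})"
    using sum.remove[OF assms, of "f(a := y)"] by (simp only: fun_upd_same)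
  also have "sum (f(a := y)) (A - {a}) = sum f (A - {a})"
    by (rule sum.cong) auto
  also have "\<dots> = sum f A - f a"
    using assms by (simp add: sum_diff1)
  finally show ?thesis
    by simp
qed

lemma strict_mono_on_lessThanI:
  fixes f :: "nat \<Rightarrow> 'a::order"
  assumes "\<And>n. Suc n < N \<Longrightarrow> f n < f (Suc n)"
  shows "strict_mono_on {..<N} f"
proof (rule strict_mono_onI)
  have "f m < f n" if "m < n" "n < N" for m n
    using that
  proof (induction m n rule: less_Suc_induct)
    case (1 i)
    then show ?case by (rule assms)
  next
    case (2 i j k)
    then have "f i < f j" "f j < f k" by simp_all
    then show ?case by (rule order.strict_trans)
  qed
  then show "f m < f n" if "m \<in> {..<N}" "n \<in> {..<N}" "m < n" for m n
    using that by simp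
qed

lemma unimodal_min_on_interval_iff:
  fixes f :: "real \<Rightarrow> real"
  assumes decreasing: "\<And>u v. 0 < u \<Longrightarrow> u < v \<Longrightarrow> v \<le> T \<Longrightarrow> f v < f u"
    and increasing: "\<And>u v. T \<le> u \<Longrightarrow> u < v \<Longrightarrow> f u < f v"
    and "0 < T" "0 < S" "a \<le> S" "S \<le> b"
  shows "(\<forall>y\<in>{a..b}. 0 < y \<longrightarrow> f S \<le> f y) \<longleftrightarrow> (a < S \<longrightarrow> S \<le> T) \<and> (S < b \<longrightarrow> T \<le> S)"
proof
  assume min: "\<forall>y\<in>{a..b}. 0 < y \<longrightarrow> f S \<le> f y"
  show "(a < S \<longrightarrow> S \<le> T) \<and> (S < b \<longrightarrow> T \<le> S)"
  proof (intro conjI impI)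
    assume "a < S"
    show "S \<le> T"
    proof (rule ccontr)
      assume "\<not> S \<le> T"
      then have "f (max a T) < f S"
        using increasing[of "max a T" S] \<open>a < S\<close> \<open>\<not> S \<le> T\<close> by simp
      moreover have "max a T \<in> {a..b}" "0 < max a T"
        using \<open>a < S\<close> \<open>\<not> S \<le> T\<close> \<open>0 < T\<close> \<open>S \<le> b\<close> by auto
      then have "f S \<le> f (max a T)"
        using min by blast
      ultimately show False by simp
    qed
  next
    assume "S < b"
    show "T \<le> S"
    proof (rule ccontr)
      assume "\<not> T \<le> S"
      then have "f (min b T) < f S"
        using decreasing[of S "min b T"] \<open>S < b\<close> \<open>0 < S\<close> by simp
      moreover have "min b T \<in> {a..b}" "0 < min b T"
        using \<open>S < b\<close> \<open>\<not> T \<le> S\<close> \<open>0 < S\<close> \<open>a \<le> S\<close> by auto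
      then have "f S \<le> f (min b T)"
        using min by blast
      ultimately show False by simp
    qed
  qed
next
  assume "(a < S \<longrightarrow> S \<le> T) \<and> (S < b \<longrightarrow> T \<le> S)"
  then have "a < S \<longrightarrow> S \<le> T" "S < b \<longrightarrow> T \<le> S"
    by simp_all
  have "f S \<le> f y" if "a \<le> y" "y \<le> b" "0 < y" for y
  proof (cases y S rule: linorder_cases)
    case less
    then show ?thesis
      using decreasing[of y S] that \<open>a < S \<longrightarrow> S \<le> T\<close> by simp
  next
    case greater
    then show ?thesis
      using increasing[of S y] that \<open>S < b \<longrightarrow> T \<le> S\<close> by simp
  qed simp
  then show "\<forall>y\<in>{a..b}. 0 < y \<longrightarrow> f S \<le> f y"
    by simp
qed

lemma inv_plus_square_diff:
  fixes c E a b :: real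
  assumes "0 < a" "0 < b"
  shows "(c / b + E * b\<^sup>2) - (c / a + E * a\<^sup>2) =
    (b - a) * (E * (a + b) * (a * b) - c) / (a * b)"
  using assms by (simp add: field_simps power2_eq_square)

lemma inv_sqrt_plus_linear_strict_antimono:
  fixes E \<tau> u v :: real
  assumes "0 < E" "0 < \<tau>" "0 < u" "u < v" "v \<le> \<tau>\<^sup>2"
  shows "2 * E * \<tau> ^ 3 / sqrt v + E * v < 2 * E * \<tau> ^ 3 / sqrt u + E * u"
proof -
  define a b where "a = sqrt u" and "b = sqrt v"
  have ab: "0 < a" "a < b" "b \<le> \<tau>"
    using assms by (auto simp: a_def b_def intro: real_le_lsqrt)
  have "(a + b) * (a * b) < (2 * \<tau>) * (\<tau> * \<tau>)"
    using ab by (intro mult_less_le_imp_less mult_mono) auto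
  then have "E * (a + b) * (a * b) - 2 * E * \<tau> ^ 3 < 0"
    using \<open>0 < E\<close> by (simp add: power3_eq_cube mult.assoc mult.left_commute[of E])
  then have "(2 * E * \<tau> ^ 3 / b + E * b\<^sup>2) - (2 * E * \<tau> ^ 3 / a + E * a\<^sup>2) < 0"
    using ab by (simp add: inv_plus_square_diff divide_neg_pos mult_pos_neg)
  moreover have "a\<^sup>2 = u" "b\<^sup>2 = v"
    using assms by (simp_all add: a_def b_def)
  ultimately show ?thesis
    unfolding a_def b_def by (simp only:)
qed

lemma inv_sqrt_plus_linear_strict_mono:
  fixes E \<tau> u v :: real
  assumes "0 < E" "0 < \<tau>" "\<tau>\<^sup>2 \<le> u" "u < v"
  shows "2 * E * \<tau> ^ 3 / sqrt u + E * u < 2 * E * \<tau> ^ 3 / sqrt v + E * v"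
proof -
  define a b where "a = sqrt u" and "b = sqrt v"
  have "0 < u"
    using \<open>0 < \<tau>\<close> \<open>\<tau>\<^sup>2 \<le> u\<close> by (meson less_le_trans zero_less_power)
  have ab: "\<tau> \<le> a" "a < b"
    using assms by (auto simp: a_def b_def real_le_rsqrt)
  have "(2 * \<tau>) * (\<tau> * \<tau>) < (a + b) * (a * b)"
    using ab assms(2) by (intro mult_less_le_imp_less mult_mono) auto
  then have "0 < E * (a + b) * (a * b) - 2 * E * \<tau> ^ 3"
    using \<open>0 < E\<close> by (simp add: power3_eq_cube mult.assoc mult.left_commute[of E])
  then have "0 < (2 * E * \<tau> ^ 3 / b + E * b\<^sup>2) - (2 * E * \<tau> ^ 3 / a + E * a\<^sup>2)"
    using ab assms(2) by (simp add: inv_plus_square_diff)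
  moreover have "a\<^sup>2 = u" "b\<^sup>2 = v"
    using \<open>0 < u\<close> \<open>u < v\<close> by (simp_all add: a_def b_def)
  ultimately show ?thesis
    unfolding a_def b_def by (simp only:)
qed

lemma cube_root_threshold:
  fixes \<rho> E G :: real
  assumes "0 < \<rho>" "0 < E" "0 < G"
  defines "\<tau> \<equiv> root 3 (\<rho> / E / (2 * sqrt G))"
  shows "0 < \<tau>" "\<rho> = 2 * E * \<tau> ^ 3 * sqrt G"
proof -
  have "0 < \<rho> / E / (2 * sqrt G)"
    using assms by simp
  then show "0 < \<tau>" "\<rho> = 2 * E * \<tau> ^ 3 * sqrt G"
    using assms(2,3) by (simp_all add: \<tau>_def field_simps)
qed

lemma cost_fun_upd:
  fixes x :: "nat \<Rightarrow> real"
  assumes "n < N"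
  defines "s \<equiv> (\<Sum>m<N. x m) - x n"
  shows "cost N G \<rho> E C p (x(n := y)) n =
    (if s + y = 0 then \<infinity>
     else ereal (\<rho> n / sqrt G / sqrt (s + y) + E n * (s + y) + (\<rho> n / G - E n * s + C n + p)))"
proof -
  have "(\<Sum>m<N. (x(n := y)) m) = s + y"
    using assms by (simp add: sum_fun_upd del: fun_upd_apply)
  then show ?thesis
    unfolding cost_def by (simp add: s_def real_sqrt_mult algebra_simps)
qed

lemma best_response_iff:
  fixes G \<tau> :: real
  assumes "0 < G" "0 < E n" "0 < \<tau>" "\<rho> n = 2 * E n * \<tau> ^ 3 * sqrt G"
    and "n < N" and x: "x \<in> {..<N} \<rightarrow>\<^sub>E {0..D}" and "0 < (\<Sum>m<N. x m)"
  shows "(\<forall>y\<in>{0..D}. cost N G \<rho> E C p x n \<le> cost N G \<rho> E C p (x(n := y)) n) \<longleftrightarrow>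
    (0 < x n \<longrightarrow> (\<Sum>m<N. x m) \<le> \<tau>\<^sup>2) \<and> (x n < D \<longrightarrow> \<tau>\<^sup>2 \<le> (\<Sum>m<N. x m))"
proof -
  define S where "S = (\<Sum>m<N. x m)"
  define s where "s = S - x n"
  define f where "f z = 2 * E n * \<tau> ^ 3 / sqrt z + E n * z" for z
  define K where "K = \<rho> n / G - E n * s + C n + p"
  have "x n \<in> {0..D}"
    using PiE_mem[OF x] \<open>n < N\<close> by simp
  have "s = (\<Sum>m\<in>{..<N} - {n}. x m)"
    using \<open>n < N\<close> by (simp add: s_def S_def sum_diff1)
  then have "0 \<le> s"
    using PiE_mem[OF x] by (auto intro!: sum_nonneg)
  have deviation:
    "cost N G \<rho> E C p (x(n := y)) n = (if s + y = 0 then \<infinity> else ereal (f (s + y) + K))" for y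
    using cost_fun_upd[OF \<open>n < N\<close>, where x = x and y = y] assms(1,4)
    by (simp add: s_def S_def f_def K_def)
  have "cost N G \<rho> E C p x n = ereal (f S + K)"
    using deviation[of "x n"] \<open>0 < (\<Sum>m<N. x m)\<close> by (simp add: s_def S_def)
  then have "(\<forall>y\<in>{0..D}. cost N G \<rho> E C p x n \<le> cost N G \<rho> E C p (x(n := y)) n) \<longleftrightarrow>
      (\<forall>y\<in>{0..D}. 0 < s + y \<longrightarrow> f S \<le> f (s + y))"
    using deviation \<open>0 \<le> s\<close> by auto
  also have "\<dots> \<longleftrightarrow> (\<forall>z\<in>{s..s + D}. 0 < z \<longrightarrow> f S \<le> f z)"
  proof -
    have "{s..s + D} = (+) s ` {0..D}"
      by (simp add: add.commute)
    then show ?thesis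
      by (simp only: ball_simps(9))
  qed
  also have "\<dots> \<longleftrightarrow> (s < S \<longrightarrow> S \<le> \<tau>\<^sup>2) \<and> (S < s + D \<longrightarrow> \<tau>\<^sup>2 \<le> S)"
  proof (rule unimodal_min_on_interval_iff)
    show "f v < f u" if "0 < u" "u < v" "v \<le> \<tau>\<^sup>2" for u v
      unfolding f_def using inv_sqrt_plus_linear_strict_antimono assms(2,3) that .
    show "f u < f v" if "\<tau>\<^sup>2 \<le> u" "u < v" for u v
      unfolding f_def using inv_sqrt_plus_linear_strict_mono assms(2,3) that .
  qed (use \<open>0 < \<tau>\<close> \<open>0 < (\<Sum>m<N. x m)\<close> \<open>x n \<in> {0..D}\<close> in \<open>simp_all add: s_def S_def\<close>)
  finally show ?thesis
    by (simp add: s_def S_def)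
qed

lemma nash_eq_sum_pos:
  assumes "nash_eq N G D \<rho> E C p x" "0 < N" "0 < D"
  shows "0 < (\<Sum>m<N. x m)"
proof (rule ccontr)
  assume "\<not> 0 < (\<Sum>m<N. x m)"
  have x: "x \<in> {..<N} \<rightarrow>\<^sub>E {0..D}"
    and stable: "cost N G \<rho> E C p x 0 \<le> cost N G \<rho> E C p (x(0 := D)) 0"
    using assms unfolding nash_eq_def by auto
  have "0 \<le> x 0" "x 0 \<le> (\<Sum>m<N. x m)"
    using PiE_mem[OF x] \<open>0 < N\<close> by (auto intro!: member_le_sum)
  then have "(\<Sum>m<N. x m) = 0" "x 0 = 0"
    using \<open>\<not> 0 < (\<Sum>m<N. x m)\<close> by linarith+
  then have "cost N G \<rho> E C p x 0 = \<infinity>" "cost N G \<rho> E C p (x(0 := D)) 0 \<noteq> \<infinity>"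
    using cost_fun_upd[OF \<open>0 < N\<close>, where x = x and y = D] \<open>0 < D\<close> by (simp_all add: cost_def)
  then show False
    using stable by simp
qed

text \<open>\<open>T n\<close> plays the role of the total contribution that minimises player \<open>n\<close>'s cost.\<close>

definition threshold_equilibrium :: "nat \<Rightarrow> real \<Rightarrow> (nat \<Rightarrow> real) \<Rightarrow> (nat \<Rightarrow> real) \<Rightarrow> bool" where
  "threshold_equilibrium N D T x \<longleftrightarrow> x \<in> {..<N} \<rightarrow>\<^sub>E {0..D} \<and> 0 < (\<Sum>m<N. x m) \<and>
     (\<forall>n<N. (0 < x n \<longrightarrow> (\<Sum>m<N. x m) \<le> T n) \<and> (x n < D \<longrightarrow> T n \<le> (\<Sum>m<N. x m)))"

lemma nash_eq_iff_threshold_equilibrium: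
  fixes G :: real and \<tau> :: "nat \<Rightarrow> real"
  assumes "0 < N" "0 < G" "0 < D"
    and "\<And>n. n < N \<Longrightarrow> 0 < E n" "\<And>n. n < N \<Longrightarrow> 0 < \<tau> n"
    and "\<And>n. n < N \<Longrightarrow> \<rho> n = 2 * E n * \<tau> n ^ 3 * sqrt G"
  shows "nash_eq N G D \<rho> E C p x \<longleftrightarrow> threshold_equilibrium N D (\<lambda>n. (\<tau> n)\<^sup>2) x"
proof (cases "x \<in> {..<N} \<rightarrow>\<^sub>E {0..D} \<and> 0 < (\<Sum>m<N. x m)")
  case True
  have "(\<forall>y\<in>{0..D}. cost N G \<rho> E C p x n \<le> cost N G \<rho> E C p (x(n := y)) n) \<longleftrightarrow>
      (0 < x n \<longrightarrow> (\<Sum>m<N. x m) \<le> (\<tau> n)\<^sup>2) \<and> (x n < D \<longrightarrow> (\<tau> n)\<^sup>2 \<le> (\<Sum>m<N. x m))"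
    if "n < N" for n
    by (rule best_response_iff) (use assms True that in auto)
  then show ?thesis
    using True unfolding nash_eq_def threshold_equilibrium_def by auto
next
  case False
  then show ?thesis
    using nash_eq_sum_pos[of N G D \<rho> E C p x] assms(1,3)
    unfolding nash_eq_def threshold_equilibrium_def by blast
qed

lemma threshold_equilibrium_exists:
  fixes T :: "nat \<Rightarrow> real"
  assumes "0 < N" "0 < D" "mono_on {..<N} T" "\<And>n. n < N \<Longrightarrow> 0 < T n"
  shows "\<exists>x. threshold_equilibrium N D T x"
proof -
  txt \<open>The critical player \<open>j\<close> is the first whose threshold exceeds the full contribution
    of the players above it; those contribute \<open>D\<close>, \<open>j\<close> tops up towards \<open>T j\<close> and
    the players below contribute nothing.\<close>
  let ?P = "\<lambda>j. j < N \<and> real (N - Suc j) * D < T j"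
  have "?P (N - 1)"
    using assms by simp
  then obtain j where "?P j" and below: "\<And>m. m < j \<Longrightarrow> \<not> ?P m"
    using exists_least_iff[of ?P] by blast
  define A where "A = real (N - Suc j) * D"
  define x where
    "x = restrict (\<lambda>m. if m < j then 0 else if m = j then min D (T j - A) else D) {..<N}"
  define S where "S = min (A + D) (T j)"
  have "j < N" "A < T j"
    using \<open>?P j\<close> unfolding A_def by blast+
  have "0 \<le> A"
    using \<open>0 < D\<close> by (simp add: A_def)
  have T_le: "T m \<le> T n" if "m \<le> n" "n < N" for m n
    using assms(3) that by (auto intro: mono_onD)
  have "(\<Sum>m<N. x m) =
      (\<Sum>m<N. (if m = j then min D (T j - A) else 0) + (if j < m then D else 0))"
    by (rule sum.cong) (auto simp: x_def)
  also have "\<dots> = min D (T j - A) + card {j<..<N} * D"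
  proof -
    have "{m. m < N \<and> j < m} = {j<..<N}"
      by auto
    then show ?thesis
      using \<open>j < N\<close> by (simp add: sum.distrib sum.inter_filter[symmetric])
  qed
  also have "\<dots> = S"
    using \<open>j < N\<close> by (simp add: S_def A_def min_def)
  finally have sum: "(\<Sum>m<N. x m) = S" .
  have "x \<in> {..<N} \<rightarrow>\<^sub>E {0..D}"
    using \<open>A < T j\<close> \<open>0 < D\<close> by (auto simp: x_def)
  moreover have "0 < S"
    using \<open>0 \<le> A\<close> \<open>A < T j\<close> \<open>0 < D\<close> by (simp add: S_def)
  moreover have "S \<le> T n" if "n < N" "0 < x n" for n
  proof -
    have "j \<le> n"
      using that by (auto simp: x_def split: if_splits)
    then show ?thesis
      using T_le[of j n] that by (simp add: S_def)
  qed
  moreover have "T n \<le> S" if "n < N" "x n < D" for n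
  proof -
    have "n \<le> j"
      using that by (auto simp: x_def split: if_splits)
    then consider "n = j" | "n < j"
      by linarith
    then show ?thesis
    proof cases
      case 1
      then show ?thesis
        using that by (simp add: x_def S_def min_def split: if_splits)
    next
      case 2
      then have "\<not> ?P (j - 1)"
        by (intro below) simp
      moreover have "real (N - Suc (j - 1)) * D = A + D"
        using 2 \<open>j < N\<close> by (simp add: A_def of_nat_diff algebra_simps)
      moreover have "j - 1 < N"
        using \<open>j < N\<close> by simp
      ultimately have "T (j - 1) \<le> A + D"
        by (simp only: not_less) simp
      moreover have "T n \<le> T (j - 1)" "T n \<le> T j"
        using 2 \<open>j < N\<close> by (simp_all add: T_le)
      ultimately show ?thesis
        by (simp add: S_def)
    qed
  qed
  ultimately have "threshold_equilibrium N D T x"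
    unfolding threshold_equilibrium_def sum by auto
  then show ?thesis
    by blast
qed

lemma threshold_equilibriumD:
  assumes "threshold_equilibrium N D T x" "n < N"
  shows "0 \<le> x n" "x n \<le> D"
    and "0 < x n \<Longrightarrow> (\<Sum>m<N. x m) \<le> T n" "x n < D \<Longrightarrow> T n \<le> (\<Sum>m<N. x m)"
  using assms PiE_mem[of x "{..<N}" "\<lambda>_. {0..D}" n] unfolding threshold_equilibrium_def by auto

lemma threshold_equilibrium_sum_unique:
  assumes "threshold_equilibrium N D T x" "threshold_equilibrium N D T z"
  shows "(\<Sum>m<N. x m) = (\<Sum>m<N. z m)"
proof -
  have "\<not> (\<Sum>m<N. u m) < (\<Sum>m<N. v m)"
    if u: "threshold_equilibrium N D T u" and v: "threshold_equilibrium N D T v" for u v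
  proof
    assume less: "(\<Sum>m<N. u m) < (\<Sum>m<N. v m)"
    have "v m \<le> u m" if "m < N" for m
    proof (cases "u m < D")
      case True
      then have "T m < (\<Sum>m<N. v m)"
        using threshold_equilibriumD(4)[OF u \<open>m < N\<close>] less by simp
      then have "\<not> 0 < v m"
        using threshold_equilibriumD(3)[OF v \<open>m < N\<close>] by linarith
      then show ?thesis
        using threshold_equilibriumD(1)[OF u \<open>m < N\<close>] by simp
    next
      case False
      then show ?thesis
        using threshold_equilibriumD(2)[OF v \<open>m < N\<close>] by simp
    qed
    then have "(\<Sum>m<N. v m) \<le> (\<Sum>m<N. u m)"
      by (intro sum_mono) simp
    with less show False
      by simp
  qed
  then show ?thesis
    using assms by (meson linorder_neqE_linordered_idom)
qed

lemma threshold_equilibrium_unique: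
  assumes "inj_on T {..<N}" "threshold_equilibrium N D T x" "threshold_equilibrium N D T z"
  shows "x = z"
proof -
  define S where "S = (\<Sum>m<N. x m)"
  have z_sum: "(\<Sum>m<N. z m) = S"
    using threshold_equilibrium_sum_unique[OF assms(3,2)] by (simp add: S_def)
  have agree: "x n = z n" if "n < N" "T n \<noteq> S" for n
    using threshold_equilibriumD[OF assms(2) \<open>n < N\<close>]
      threshold_equilibriumD[OF assms(3) \<open>n < N\<close>] \<open>T n \<noteq> S\<close> z_sum
    unfolding S_def by fastforce
  show "x = z"
  proof (rule PiE_ext)
    show "x \<in> {..<N} \<rightarrow>\<^sub>E {0..D}" "z \<in> {..<N} \<rightarrow>\<^sub>E {0..D}"
      using assms(2,3) unfolding threshold_equilibrium_def by blast+
  next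
    fix n assume "n \<in> {..<N}"
    show "x n = z n"
    proof (cases "T n = S")
      case True
      have "x m = z m" if "m \<in> {..<N} - {n}" for m
        using agree[of m] that True \<open>n \<in> {..<N}\<close> inj_onD[OF assms(1), of m n] by auto
      then have "(\<Sum>m\<in>{..<N} - {n}. x m) = (\<Sum>m\<in>{..<N} - {n}. z m)"
        by (rule sum.cong[OF refl])
      moreover have "x n + (\<Sum>m\<in>{..<N} - {n}. x m) = z n + (\<Sum>m\<in>{..<N} - {n}. z m)"
        using sum.remove[of "{..<N}" n x] sum.remove[of "{..<N}" n z] \<open>n \<in> {..<N}\<close> z_sum
        by (simp add: S_def)
      ultimately show ?thesis
        by simp
    qed (use agree \<open>n \<in> {..<N}\<close> in simp)
  qed
qed

theorem theorem2:
  fixes N G :: nat and D p :: real and \<rho> E C :: "nat \<Rightarrow> real"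
  assumes "N \<ge> 1" and "G > 0" and "D > 0"
    and "\<And>n. n < N \<Longrightarrow> \<rho> n > 0"
    and "\<And>n. n < N \<Longrightarrow> E n > 0"
    and "\<And>n. Suc n < N \<Longrightarrow> \<rho> n / E n < \<rho> (Suc n) / E (Suc n)"
  shows "\<exists>!x. nash_eq N (real G) D \<rho> E C p x"
proof -
  define \<tau> where "\<tau> n = root 3 (\<rho> n / E n / (2 * sqrt G))" for n
  have \<tau>: "0 < \<tau> n" "\<rho> n = 2 * E n * \<tau> n ^ 3 * sqrt G" if "n < N" for n
    using cube_root_threshold[of "\<rho> n" "E n" G] assms(2,4,5) that by (simp_all add: \<tau>_def)
  have "\<tau> n < \<tau> (Suc n)" if "Suc n < N" for n
    unfolding \<tau>_def using assms(2)
    by (intro real_root_less_mono divide_strict_right_mono assms(6) that) simp_all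
  then have T_mono: "strict_mono_on {..<N} (\<lambda>n. (\<tau> n)\<^sup>2)"
    using \<tau> by (intro strict_mono_on_lessThanI power_strict_mono) (auto intro: less_imp_le)
  have nash_iff:
    "nash_eq N (real G) D \<rho> E C p x \<longleftrightarrow> threshold_equilibrium N D (\<lambda>n. (\<tau> n)\<^sup>2) x" for x
    by (rule nash_eq_iff_threshold_equilibrium) (use assms \<tau> in auto)
  obtain x where "threshold_equilibrium N D (\<lambda>n. (\<tau> n)\<^sup>2) x"
    using threshold_equilibrium_exists[OF _ assms(3) strict_mono_on_imp_mono_on[OF T_mono]]
      assms(1) \<tau> by force
  then show ?thesis
    using threshold_equilibrium_unique[OF strict_mono_on_imp_inj_on[OF T_mono]] nash_iff
    by blast
qed

end
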